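(* Let $(S, \cdot)$ be a semigroup, let $r$ be an idempotent in $J(S)$, and let $R: \mathcal{P}_f({}^{\mathbb{N}}S) \to r$ be a function. Then there exist a function $\mu: \mathcal{P}_f({}^{\mathbb{N}}S) \to \mathbb{N}$, $\alpha \in \times_{F \in \mathcal{P}_f({}^{\mathbb{N}}S)} S^{\mu(F) + 1}$ and $\tau \in \times_{F \in \mathcal{P}_f({}^{\mathbb{N}}S)} \mathcal{J}_{\mu(F)}$ such that (1) if $F, G \in \mathcal{P}_f({}^{\mathbb{N}}S)$ and $F \subsetneq G$, then $\tau(F)(\mu(F)) < \tau(G)(1)$; and (2) if $m \in \mathbb{N}$, $G_1, \ldots, G_m \in \mathcal{P}_f({}^{\mathbb{N}}S)$ with $G_1 \subsetneq \cdots \subsetneq G_m$, and $f_i \in G_i$ for each $i \in \{1, \ldots, m\}$, then $\prod_{i=1}^{m} x(\mu(G_i), \alpha(G_i), \tau(G_i), f_i) \in R(G_1)$ (product taken in increasing order of $i$).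
   Context: ${}^{\mathbb{N}}S$ is the set of all sequences $f:\mathbb{N}\to S$; $\mathcal{P}_f(X)$ is the set of nonempty finite subsets of $X$. For $k\in\mathbb{N}$, $\mathcal{J}_k=\{t\in\mathbb{N}^k: t(1)<t(2)<\cdots<t(k)\}$. For $k\in\mathbb{N}$, $a\in S^{k+1}$, $t\in\mathcal{J}_k$ and $f\in{}^{\mathbb{N}}S$, $x(k,a,t,f)=\big(\prod_{j=1}^k a(j)f(t(j))\big)a(k+1) = a(1)f(t(1))a(2)f(t(2))\cdots a(k)f(t(k))a(k+1)$. A set $A\subseteq S$ is a J-set if for every $F\in\mathcal{P}_f({}^{\mathbb{N}}S)$ there exist $k\in\mathbb{N}$, $a\in S^{k+1}$ and $t\in\mathcal{J}_k$ such that $x(k,a,t,f)\in A$ for all $f\in F$. $\beta S$ is the set of ultrafilters on $S$ with $p\cdot q = \{A\subseteq S: \{x : x^{-1}A\in q\}\in p\}$, $x^{-1}A=\{y: xy\in A\}$; $J(S)=\{p\in\beta S: \text{every member of } p \text{ is a J-set}\}$, and $r$ is idempotent if $r\cdot r=r$. *)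

theory Defs
  imports Main
begin

text \<open>The semigroup S is the universe of a type of class semigroup_mult.
  Sequences in S are functions nat => 'a (the domain N of sequences is relabelled as nat).
  Tuples a in S^(k+1) and t in J_k are functions indexed by 1..k+1 resp. 1..k.\<close>

definition Pf :: "'b set \<Rightarrow> bool" where
  "Pf X \<longleftrightarrow> finite X \<and> X \<noteq> {}"

definition Jk :: "nat \<Rightarrow> (nat \<Rightarrow> nat) \<Rightarrow> bool" where
  "Jk k t \<longleftrightarrow> (\<forall>i j. 1 \<le> i \<longrightarrow> i < j \<longrightarrow> j \<le> k \<longrightarrow> t i < t j)"

fun xw :: "nat \<Rightarrow> (nat \<Rightarrow> 'a::semigroup_mult) \<Rightarrow> (nat \<Rightarrow> nat) \<Rightarrow> (nat \<Rightarrow> 'a) \<Rightarrow> 'a" where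
  "xw 0 a t f = a 1"
| "xw (Suc k) a t f = xw k a t f * f (t (Suc k)) * a (Suc (Suc k))"

definition Jset :: "'a::semigroup_mult set \<Rightarrow> bool" where
  "Jset A \<longleftrightarrow> (\<forall>F :: (nat \<Rightarrow> 'a) set. Pf F \<longrightarrow>
     (\<exists>k a t. k \<ge> 1 \<and> Jk k t \<and> (\<forall>f\<in>F. xw k a t f \<in> A)))"

definition ultrafilter_on :: "'a set set \<Rightarrow> bool" where
  "ultrafilter_on p \<longleftrightarrow> UNIV \<in> p \<and> {} \<notin> p
     \<and> (\<forall>A B. A \<in> p \<longrightarrow> A \<subseteq> B \<longrightarrow> B \<in> p)
     \<and> (\<forall>A B. A \<in> p \<longrightarrow> B \<in> p \<longrightarrow> A \<inter> B \<in> p)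
     \<and> (\<forall>A. A \<in> p \<or> - A \<in> p)"

definition betaS :: "'a set set set" where
  "betaS = {p. ultrafilter_on p}"

definition umult :: "'a::semigroup_mult set set \<Rightarrow> 'a set set \<Rightarrow> 'a set set" where
  "umult p q = {A. {x. {y. x * y \<in> A} \<in> q} \<in> p}"

definition JS :: "'a::semigroup_mult set set set" where
  "JS = {p \<in> betaS. \<forall>A\<in>p. Jset A}"

fun ordprod :: "(nat \<Rightarrow> 'a::semigroup_mult) \<Rightarrow> nat \<Rightarrow> 'a" where
  "ordprod g 0 = undefined"
| "ordprod g (Suc 0) = g 1"
| "ordprod g (Suc (Suc n)) = ordprod g (Suc n) * g (Suc (Suc n))"

end

theory Submission imports Defs begin

text \<open>The data \<mu>(G), \<alpha>(G), \<tau>(G) are built by recursion along proper inclusion of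
  finite sets G, together with a set C(G) \<in> r of admissible continuations (stage_cont): every word
  x = x(\<mu>(G), \<alpha>(G), \<tau>(G), f) with f \<in> G lies in R(G) and in each C(F) for F \<subset> G,
  and x C(G) is contained in each of these sets as well. Such words exist because for an
  idempotent r the set star r A = {x \<in> A. x\<inverse>A \<in> r} belongs to r whenever A does, so the
  intersection of the finitely many relevant star r A is a J-set; the intersection of the
  corresponding sets x\<inverse>A is then the new C(G). Along a chain G_1 \<subset> \<dots> \<subset> G_m the
  partial products keep landing in R(G_1) with continuations C(G_i).\<close>

definition star :: "'a set set \<Rightarrow> 'a::semigroup_mult set \<Rightarrow> 'a set" where
  "star r A = {x \<in> A. {y. x * y \<in> A} \<in> r}"

lemma ultrafilter_onD:
  assumes "ultrafilter_on r"
  shows "UNIV \<in> r" "A \<in> r \<Longrightarrow> B \<in> r \<Longrightarrow> A \<inter> B \<in> r"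
  using assms unfolding ultrafilter_on_def by blast+

lemma ultrafilter_on_INT:
  assumes "ultrafilter_on r" "finite I" "\<And>i. i \<in> I \<Longrightarrow> A i \<in> r"
  shows "(\<Inter>i\<in>I. A i) \<in> r"
  using assms(2,3)
  by (induction I rule: finite_induct) (simp_all add: ultrafilter_onD[OF assms(1)])

lemma star_mem:
  assumes "ultrafilter_on r" "umult r r = r" "A \<in> r"
  shows "star r A \<in> r"
proof -
  have "{x. {y. x * y \<in> A} \<in> r} \<in> r"
    using assms(2,3) unfolding umult_def by auto
  moreover have "star r A = A \<inter> {x. {y. x * y \<in> A} \<in> r}"
    unfolding star_def by auto
  ultimately show ?thesis
    using assms(3) ultrafilter_onD(2)[OF assms(1)] by simp
qed

lemma xw_shift: "xw k a t (\<lambda>n. f (n + c)) = xw k a (\<lambda>i. t i + c) f"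
  by (induction k) auto

lemma Jset_witness_beyond:
  assumes "Jset A" "Pf F"
  obtains k a t where "1 \<le> k" "Jk k t" "N < t 1" "\<forall>f\<in>F. xw k a t f \<in> A"
proof -
  let ?F = "(\<lambda>f n. f (n + Suc N)) ` F"
  have "Pf ?F" using assms(2) unfolding Pf_def by auto
  then obtain k a t where k: "1 \<le> k" "Jk k t" "\<forall>f\<in>?F. xw k a t f \<in> A"
    using assms(1) unfolding Jset_def by blast
  have "\<forall>f\<in>F. xw k a (\<lambda>i. t i + Suc N) f \<in> A"
  proof
    fix f assume "f \<in> F"
    then have "xw k a t (\<lambda>n. f (n + Suc N)) \<in> A" using k(3) by blast
    then show "xw k a (\<lambda>i. t i + Suc N) f \<in> A" by (simp only: xw_shift)
  qed
  moreover have "Jk k (\<lambda>i. t i + Suc N)"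
    using k(2) unfolding Jk_def by auto
  ultimately show ?thesis
    using that k(1) by simp
qed

lemma ordprod_chain_mem:
  fixes g :: "nat \<Rightarrow> 'a::semigroup_mult"
  assumes "g 1 \<in> A" "C 1 \<subseteq> {y. g 1 * y \<in> A}"
    and "\<And>i. 1 \<le> i \<Longrightarrow> i < Suc n \<Longrightarrow> g (Suc i) \<in> C i \<and> C (Suc i) \<subseteq> {y. g (Suc i) * y \<in> C i}"
  shows "ordprod g (Suc n) \<in> A \<and> C (Suc n) \<subseteq> {y. ordprod g (Suc n) * y \<in> A}"
  using assms(3)
proof (induction n)
  case 0
  then show ?case using assms(1,2) by simp
next
  case (Suc n)
  then have IH: "ordprod g (Suc n) \<in> A" "C (Suc n) \<subseteq> {y. ordprod g (Suc n) * y \<in> A}"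
    by simp_all
  have "g (Suc (Suc n)) \<in> C (Suc n)" "C (Suc (Suc n)) \<subseteq> {y. g (Suc (Suc n)) * y \<in> C (Suc n)}"
    using Suc.prems[of "Suc n"] by simp_all
  with IH show ?case by (auto simp: mult.assoc)
qed

lemma finite_psubset_recursion:
  assumes local: "\<And>h h' G c. (\<And>F. F \<subset> G \<Longrightarrow> h F = h' F) \<Longrightarrow> P h G c = P h' G c"
    and step: "\<And>h G. finite G \<Longrightarrow> (\<And>F. F \<subset> G \<Longrightarrow> P h F (h F)) \<Longrightarrow> \<exists>c. P h G c"
  obtains h where "\<And>G. finite G \<Longrightarrow> P h G (h G)"
proof -
  define h where "h = wfrec finite_psubset (\<lambda>h G. SOME c. P h G c)"
  have h_eq: "h G = (SOME c. P h G c)" if "finite G" for G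
  proof -
    have "h G = (SOME c. P (cut h finite_psubset G) G c)"
      unfolding h_def by (rule wfrec) simp
    also have "\<dots> = (SOME c. P h G c)"
      using local[of G "cut h finite_psubset G" h] that
      by (simp add: cut_apply finite_psubset_def)
    finally show ?thesis .
  qed
  have "P h G (h G)" if "finite G" for G
    using that
  proof (induction G rule: finite_psubset_induct)
    case (psubset G)
    then have "\<exists>c. P h G c" using step by blast
    then show ?case unfolding h_eq[OF psubset(1)] by (rule someI_ex)
  qed
  with that show ?thesis by blast
qed

record 'a stage =
  stage_len :: nat
  stage_coef :: "nat \<Rightarrow> 'a"
  stage_pos :: "nat \<Rightarrow> nat"
  stage_cont :: "'a set"

definition stage_word :: "'a::semigroup_mult stage \<Rightarrow> (nat \<Rightarrow> 'a) \<Rightarrow> 'a" where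
  "stage_word s f = xw (stage_len s) (stage_coef s) (stage_pos s) f"

definition stage_targets ::
    "((nat \<Rightarrow> 'a) set \<Rightarrow> 'a set) \<Rightarrow> ((nat \<Rightarrow> 'a) set \<Rightarrow> 'a stage) \<Rightarrow> (nat \<Rightarrow> 'a) set \<Rightarrow> 'a set set" where
  "stage_targets R h G = insert (R G) ((\<lambda>F. stage_cont (h F)) ` {F. F \<subset> G \<and> F \<noteq> {}})"

definition good_stage :: "'a::semigroup_mult set set \<Rightarrow> ((nat \<Rightarrow> 'a) set \<Rightarrow> 'a set)
    \<Rightarrow> ((nat \<Rightarrow> 'a) set \<Rightarrow> 'a stage) \<Rightarrow> (nat \<Rightarrow> 'a) set \<Rightarrow> 'a stage \<Rightarrow> bool" where
  "good_stage r R h G s \<longleftrightarrow> G = {} \<or>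
     (1 \<le> stage_len s \<and> Jk (stage_len s) (stage_pos s)
      \<and> (\<forall>F. F \<subset> G \<longrightarrow> F \<noteq> {} \<longrightarrow> stage_pos (h F) (stage_len (h F)) < stage_pos s 1)
      \<and> stage_cont s \<in> r
      \<and> (\<forall>f\<in>G. \<forall>A\<in>stage_targets R h G.
           stage_word s f \<in> A \<and> stage_cont s \<subseteq> {y. stage_word s f * y \<in> A}))"

lemma good_stage_cong:
  assumes "\<And>F. F \<subset> G \<Longrightarrow> h F = h' F"
  shows "good_stage r R h G s = good_stage r R h' G s"
proof -
  have "stage_targets R h G = stage_targets R h' G"
    unfolding stage_targets_def using assms by auto
  then show ?thesis
    unfolding good_stage_def using assms by auto
qed

lemma good_stage_targetD:
  assumes "good_stage r R h G s" "f \<in> G" "A \<in> stage_targets R h G"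
  shows "stage_word s f \<in> A" "stage_cont s \<subseteq> {y. stage_word s f * y \<in> A}"
  using assms unfolding good_stage_def by auto

lemma stage_targets_memI:
  "R G \<in> stage_targets R h G"
  "F \<subset> G \<Longrightarrow> F \<noteq> {} \<Longrightarrow> stage_cont (h F) \<in> stage_targets R h G"
  unfolding stage_targets_def by auto

lemma good_stage_exists:
  assumes r: "r \<in> JS" and idem: "umult r r = r" and R: "\<forall>F. Pf F \<longrightarrow> R F \<in> r"
    and G: "finite G" and below: "\<And>F. F \<subset> G \<Longrightarrow> good_stage r R h F (h F)"
  shows "\<exists>s. good_stage r R h G s"
proof (cases "G = {}")
  case True
  then show ?thesis unfolding good_stage_def by blast
next
  case False
  then have "Pf G" using G unfolding Pf_def by simp
  have uf: "ultrafilter_on r" using r unfolding JS_def betaS_def by simp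
  let ?T = "stage_targets R h G"
  have proper_finite: "finite {F. F \<subset> G}"
    using G by (auto intro: finite_subset[of _ "Pow G"])
  then have "finite ?T"
    unfolding stage_targets_def by simp
  moreover have "?T \<subseteq> r"
    using R \<open>Pf G\<close> below unfolding stage_targets_def good_stage_def by auto
  ultimately have "(\<Inter>A\<in>?T. star r A) \<in> r"
    using ultrafilter_on_INT[OF uf] star_mem[OF uf idem] by blast
  then have "Jset (\<Inter>A\<in>?T. star r A)"
    using r unfolding JS_def by simp
  obtain N where N: "\<And>F. F \<subset> G \<Longrightarrow> stage_pos (h F) (stage_len (h F)) \<le> N"
    using proper_finite finite_nat_set_iff_bounded_le
      [of "(\<lambda>F. stage_pos (h F) (stage_len (h F))) ` {F. F \<subset> G}"] by auto
  obtain k a t where kat: "1 \<le> k" "Jk k t" "N < t 1"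
    and words: "\<forall>f\<in>G. xw k a t f \<in> (\<Inter>A\<in>?T. star r A)"
    by (rule Jset_witness_beyond[OF \<open>Jset _\<close> \<open>Pf G\<close>])
  define C where "C = (\<Inter>f\<in>G. \<Inter>A\<in>?T. {y. xw k a t f * y \<in> A})"
  have "C \<in> r"
    unfolding C_def using words \<open>finite ?T\<close>
    by (intro ultrafilter_on_INT[OF uf G] ultrafilter_on_INT[OF uf]) (auto simp: star_def)
  let ?s = "\<lparr>stage_len = k, stage_coef = a, stage_pos = t, stage_cont = C\<rparr>"
  have "\<forall>F. F \<subset> G \<longrightarrow> F \<noteq> {} \<longrightarrow> stage_pos (h F) (stage_len (h F)) < t 1"
    using N kat(3) le_less_trans by blast
  moreover have "\<forall>f\<in>G. \<forall>A\<in>?T. xw k a t f \<in> A \<and> C \<subseteq> {y. xw k a t f * y \<in> A}"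
    using words unfolding C_def star_def by blast
  ultimately have "good_stage r R h G ?s"
    using kat \<open>C \<in> r\<close> unfolding good_stage_def stage_word_def by simp
  then show ?thesis ..
qed

lemma good_stages_exist:
  assumes "r \<in> JS" "umult r r = r" "\<forall>F. Pf F \<longrightarrow> R F \<in> r"
  obtains h where "\<And>G. finite G \<Longrightarrow> good_stage r R h G (h G)"
  using finite_psubset_recursion[of "good_stage r R", OF good_stage_cong]
    good_stage_exists[OF assms] by blast

lemma good_stages_ordprod_mem:
  assumes good: "\<And>G. Pf G \<Longrightarrow> good_stage r R h G (h G)"
    and m: "1 \<le> m" and G: "\<forall>i\<in>{1..m}. Pf (G i)" "\<forall>i. 1 \<le> i \<longrightarrow> i < m \<longrightarrow> G i \<subset> G (Suc i)"
    and f: "\<forall>i\<in>{1..m}. f i \<in> G i"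
  shows "ordprod (\<lambda>i. stage_word (h (G i)) (f i)) m \<in> R (G 1)"
proof -
  obtain n where n: "m = Suc n" using m by (cases m) auto
  have "Pf (G 1)" "f 1 \<in> G 1" using G f n by auto
  note first = good_stage_targetD[OF good[OF \<open>Pf (G 1)\<close>] \<open>f 1 \<in> G 1\<close> stage_targets_memI(1)]
  have next_stage: "stage_word (h (G (Suc i))) (f (Suc i)) \<in> stage_cont (h (G i)) \<and>
      stage_cont (h (G (Suc i))) \<subseteq> {y. stage_word (h (G (Suc i))) (f (Suc i)) * y \<in> stage_cont (h (G i))}"
    if "1 \<le> i" "i < Suc n" for i
  proof -
    have "Pf (G (Suc i))" "f (Suc i) \<in> G (Suc i)" "G i \<subset> G (Suc i)" "G i \<noteq> {}"
      using G f that n unfolding Pf_def by auto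
    then show ?thesis
      using good_stage_targetD[OF good _ stage_targets_memI(2)] by simp
  qed
  show ?thesis
    using ordprod_chain_mem[where C = "\<lambda>i. stage_cont (h (G i))", OF first next_stage] n by simp
qed

theorem theorem3p2:
  fixes r :: "'a::semigroup_mult set set"
    and R :: "(nat \<Rightarrow> 'a) set \<Rightarrow> 'a set"
  assumes "r \<in> JS" and "umult r r = r"
    and "\<forall>F. Pf F \<longrightarrow> R F \<in> r"
  shows "\<exists>(\<mu> :: (nat \<Rightarrow> 'a) set \<Rightarrow> nat) (\<alpha> :: (nat \<Rightarrow> 'a) set \<Rightarrow> nat \<Rightarrow> 'a)
            (\<tau> :: (nat \<Rightarrow> 'a) set \<Rightarrow> nat \<Rightarrow> nat).
     (\<forall>F. Pf F \<longrightarrow> \<mu> F \<ge> 1 \<and> Jk (\<mu> F) (\<tau> F))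
   \<and> (\<forall>F G. Pf F \<longrightarrow> Pf G \<longrightarrow> F \<subset> G \<longrightarrow> \<tau> F (\<mu> F) < \<tau> G 1)
   \<and> (\<forall>(m::nat) (G :: nat \<Rightarrow> (nat \<Rightarrow> 'a) set) (f :: nat \<Rightarrow> nat \<Rightarrow> 'a).
        m \<ge> 1 \<longrightarrow> (\<forall>i\<in>{1..m}. Pf (G i)) \<longrightarrow>
        (\<forall>i. 1 \<le> i \<longrightarrow> i < m \<longrightarrow> G i \<subset> G (Suc i)) \<longrightarrow>
        (\<forall>i\<in>{1..m}. f i \<in> G i) \<longrightarrow>
        ordprod (\<lambda>i. xw (\<mu> (G i)) (\<alpha> (G i)) (\<tau> (G i)) (f i)) m \<in> R (G 1))"
proof -
  obtain h where "\<And>G. finite G \<Longrightarrow> good_stage r R h G (h G)"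
    using good_stages_exist[OF assms] by blast
  then have good: "good_stage r R h G (h G)" "G \<noteq> {}" if "Pf G" for G
    using that unfolding Pf_def by auto
  have "1 \<le> stage_len (h F) \<and> Jk (stage_len (h F)) (stage_pos (h F))" if "Pf F" for F
    using good[OF that] unfolding good_stage_def by simp
  moreover have "stage_pos (h F) (stage_len (h F)) < stage_pos (h G) 1"
    if "Pf F" "Pf G" "F \<subset> G" for F G
    using good[OF that(2)] good(2)[OF that(1)] that(3) unfolding good_stage_def by simp
  ultimately show ?thesis
    using good_stages_ordprod_mem[OF good(1)] unfolding stage_word_def
    by (intro exI[of _ "\<lambda>G. stage_len (h G)"] exI[of _ "\<lambda>G. stage_coef (h G)"]
        exI[of _ "\<lambda>G. stage_pos (h G)"]) simp
qed

end
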